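(* Let $(\mathcal T,d)$ be a metric space, $f:\mathcal X^n\to\mathcal T$, $\ell:\mathbb R_+\to\mathbb R_+$ non-decreasing, $L(s,t)=\ell(d(s,t))$, and $\varepsilon>0$. If $M$ is an $\varepsilon$-differentially private mechanism with values in $\mathcal T$, then for every integer $k\ge1$, $$\sup_{x\in\mathcal X^n}\mathbb E[L(M(x),f(x))]\ge \sup_{x\in\mathcal X^n}\frac{\ell(\omega_f(x;k)/2)}{e^{k\varepsilon}+1}.$$ If $M$ is additionally $L$-unbiased, then for every $x\in\mathcal X^n$ and every integer $k\ge1$, $$\mathbb E[L(M(x),f(x))]\ge \frac{\ell(\omega_f(x;k)/2)}{e^{2k\varepsilon}+1}.$$
   Context: For $x,x'\in\mathcal X^n$, $d_H(x,x')=|\{i:x_i\neq x_i'\}|$ is the Hamming distance; $x,x'$ are neighboring if $d_H(x,x')\le 1$. A mechanism $M$ is $\varepsilon$-differentially private if for all neighboring $x,x'$ and all measurable $S$, $\mathbb P(M(x)\in S)\le e^{\varepsilon}\mathbb P(M(x')\in S)$. The local modulus of continuity is $\omega_f(x;k)=\sup\{d(f(x),f(x')):x'\in\mathcal X^n,\ d_H(x,x')\le k\}$ for real $k\ge0$. A mechanism $M$ is $L$-unbiased if $\mathbb E[L(M(x),f(x))]\le \mathbb E[L(M(x),t)]$ for all $x\in\mathcal X^n$, $t\in\mathcal T$. *)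

theory Defs
  imports "HOL-Probability.Probability"
begin

text \<open>Datasets are elements of X^n, modelled as functions from a finite index type 'n
  (with CARD('n) = n) to the data type 'x (X = UNIV).\<close>

definition hamming :: "('n::finite \<Rightarrow> 'x) \<Rightarrow> ('n \<Rightarrow> 'x) \<Rightarrow> nat" where
  "hamming x y = card {i. x i \<noteq> y i}"

definition neighboring :: "('n::finite \<Rightarrow> 'x) \<Rightarrow> ('n \<Rightarrow> 'x) \<Rightarrow> bool" where
  "neighboring x y \<longleftrightarrow> hamming x y \<le> 1"

definition mechanism :: "(('n::finite \<Rightarrow> 'x) \<Rightarrow> 't::metric_space measure) \<Rightarrow> bool" where
  "mechanism M \<longleftrightarrow> (\<forall>x. prob_space (M x) \<and> sets (M x) = sets borel)"

definition diff_private ::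
  "real \<Rightarrow> (('n::finite \<Rightarrow> 'x) \<Rightarrow> 't::metric_space measure) \<Rightarrow> bool" where
  "diff_private \<epsilon> M \<longleftrightarrow>
     (\<forall>x x'. neighboring x x' \<longrightarrow>
        (\<forall>S \<in> sets borel. measure (M x) S \<le> exp \<epsilon> * measure (M x') S))"

definition loc_mod ::
  "(('n::finite \<Rightarrow> 'x) \<Rightarrow> 't::metric_space) \<Rightarrow> ('n \<Rightarrow> 'x) \<Rightarrow> real \<Rightarrow> ereal" where
  "loc_mod f x k = (SUP x' \<in> {x'. real (hamming x x') \<le> k}. ereal (dist (f x) (f x')))"

definition exp_loss ::
  "(real \<Rightarrow> real) \<Rightarrow> (('n::finite \<Rightarrow> 'x) \<Rightarrow> 't::metric_space measure) \<Rightarrow> ('n \<Rightarrow> 'x) \<Rightarrow> 't \<Rightarrow> ennreal" where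
  "exp_loss l M x t = (\<integral>\<^sup>+ s. ennreal (l (dist s t)) \<partial>M x)"

definition unbiased ::
  "(real \<Rightarrow> real) \<Rightarrow> (('n::finite \<Rightarrow> 'x) \<Rightarrow> 't::metric_space measure) \<Rightarrow> (('n \<Rightarrow> 'x) \<Rightarrow> 't) \<Rightarrow> bool" where
  "unbiased l M f \<longleftrightarrow> (\<forall>x t. exp_loss l M x (f x) \<le> exp_loss l M x t)"

text \<open>l applied to an extended nonnegative argument: at infinity we use the
  (monotone) limit sup_{t>=0} l(t).\<close>
definition ell_ext :: "(real \<Rightarrow> real) \<Rightarrow> ereal \<Rightarrow> ennreal" where
  "ell_ext l w = (if w = \<infinity> then (SUP t \<in> {0..}. ennreal (l t)) else ennreal (l (real_of_ereal w)))"

end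

theory Submission
  imports Defs
begin

text \<open>Suppose f moves by almost 2r within Hamming distance k of x. Among the nearby inputs x' one
  can choose one for which the open r-balls around f x and f x' share almost no mass under M x,
  because their intersection lies in a thin annulus around f x. Either M x' puts most of its mass
  outside the ball around f x', paying loss at least l r on that event, or, by group privacy with
  factor exp (k \<epsilon>), M x puts correspondingly much mass outside the ball around f x. Writing
  E y for exp_loss l M y (f y), this gives l r \<le> E x' + exp (k \<epsilon>) E x up to the overlap,
  and taking suprema over the inputs yields the first bound. If M is unbiased, E x' is at most the
  loss of M x' measured at f x, which group privacy bounds by exp (k \<epsilon>) E x; this second use
  of group privacy produces the factor exp (2 k \<epsilon>).\<close>

lemma mechanism_prob_space: "mechanism M \<Longrightarrow> prob_space (M x)"
  unfolding mechanism_def by blast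

lemma sets_mechanism: "mechanism M \<Longrightarrow> sets (M x) = sets borel"
  unfolding mechanism_def by blast

lemma hamming_self [simp]: "hamming x x = 0"
  unfolding hamming_def by simp

lemma hamming_commute: "hamming x y = hamming y x"
  unfolding hamming_def by metis

lemma hamming_eq_0_iff: "hamming x y = 0 \<longleftrightarrow> x = y"
  unfolding hamming_def by auto

lemma hamming_Suc_neighboring:
  fixes x y :: "'n::finite \<Rightarrow> 'x"
  assumes "hamming x y = Suc m"
  obtains z where "neighboring x z" "hamming z y = m"
proof -
  obtain i where i: "x i \<noteq> y i"
    using assms by (metis hamming_eq_0_iff nat.distinct(1) ext)
  define z where "z = x(i := y i)"
  have "{j. x j \<noteq> z j} \<subseteq> {i}"
    unfolding z_def by auto
  then have "neighboring x z"
    unfolding neighboring_def hamming_def using card_mono[of "{i}"] by fastforce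
  moreover have "{j. z j \<noteq> y j} = {j. x j \<noteq> y j} - {i}"
    unfolding z_def using i by auto
  then have "hamming z y = m"
    using assms i unfolding hamming_def by (simp add: card_Diff_singleton)
  ultimately show ?thesis
    using that by blast
qed

lemma diff_private_hamming_eq:
  assumes dp: "diff_private \<epsilon> M" and S: "S \<in> sets borel"
  shows "hamming x y = m \<Longrightarrow> measure (M x) S \<le> exp (real m * \<epsilon>) * measure (M y) S"
proof (induction m arbitrary: x)
  case 0
  then show ?case by (simp add: hamming_eq_0_iff)
next
  case (Suc m)
  obtain z where z: "neighboring x z" "hamming z y = m"
    using Suc.prems by (rule hamming_Suc_neighboring)
  have "measure (M x) S \<le> exp \<epsilon> * measure (M z) S"
    using dp z(1) S unfolding diff_private_def by blast
  also have "\<dots> \<le> exp \<epsilon> * (exp (real m * \<epsilon>) * measure (M y) S)"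
    using Suc.IH[OF z(2)] by simp
  also have "\<dots> = exp (real (Suc m) * \<epsilon>) * measure (M y) S"
    by (simp add: distrib_right exp_add)
  finally show ?case .
qed

lemma diff_private_hamming:
  assumes "diff_private \<epsilon> M" "\<epsilon> \<ge> 0" "hamming x y \<le> k" "S \<in> sets borel"
  shows "measure (M x) S \<le> exp (real k * \<epsilon>) * measure (M y) S"
proof -
  have "measure (M x) S \<le> exp (real (hamming x y) * \<epsilon>) * measure (M y) S"
    using diff_private_hamming_eq assms(1,4) by blast
  also have "\<dots> \<le> exp (real k * \<epsilon>) * measure (M y) S"
    using assms(2,3) by (intro mult_right_mono) (auto intro: mult_right_mono)
  finally show ?thesis .
qed

lemma nn_integral_le_scaled:
  assumes sets: "sets M = sets N"
    and le: "\<And>A. A \<in> sets M \<Longrightarrow> emeasure M A \<le> c * emeasure N A"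
    and g: "g \<in> borel_measurable N"
  shows "nn_integral M g \<le> c * nn_integral N g"
proof -
  have "emeasure M A \<le> c * emeasure N A" for A
    using le[of A] sets by (cases "A \<in> sets M") (simp_all add: emeasure_notin_sets)
  then have "M \<le> scale_measure c N"
    unfolding le_measure_iff using sets sets_eq_imp_space_eq[OF sets]
    by (simp add: space_scale_measure le_fun_def)
  then have "nn_integral M g \<le> nn_integral (scale_measure c N) g"
    using sets by (intro nn_integral_mono_measure) simp
  also have "\<dots> = c * nn_integral N g"
    using g by (rule nn_integral_scale_measure)
  finally show ?thesis .
qed

lemma borel_measurable_loss:
  fixes t :: "'t::metric_space"
  assumes "mono_on {0..} l"
  shows "(\<lambda>s. ennreal (l (dist s t))) \<in> borel_measurable borel"
proof -
  have "mono (\<lambda>u. l (max u 0))"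
    using assms by (auto intro!: monoI mono_onD[OF assms])
  then have "(\<lambda>u. l (max u 0)) \<in> borel_measurable borel"
    by (rule borel_measurable_mono)
  then have "(\<lambda>s. l (max (dist s t) 0)) \<in> borel_measurable borel"
    by (rule measurable_compose[rotated]) (intro borel_measurable_continuous_onI continuous_intros)
  then show ?thesis
    by simp
qed

lemma exp_loss_hamming:
  assumes mech: "mechanism M" and dp: "diff_private \<epsilon> M" and "\<epsilon> \<ge> 0"
    and "mono_on {0..} l" and "hamming x y \<le> k"
  shows "exp_loss l M x t \<le> ennreal (exp (real k * \<epsilon>)) * exp_loss l M y t"
  unfolding exp_loss_def
proof (rule nn_integral_le_scaled)
  interpret X: prob_space "M x" using mech by (rule mechanism_prob_space)
  interpret Y: prob_space "M y" using mech by (rule mechanism_prob_space)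
  fix A assume "A \<in> sets (M x)"
  then have "measure (M x) A \<le> exp (real k * \<epsilon>) * measure (M y) A"
    using diff_private_hamming[OF dp assms(3,5)] sets_mechanism[OF mech] by blast
  then have "ennreal (measure (M x) A) \<le> ennreal (exp (real k * \<epsilon>)) * ennreal (measure (M y) A)"
    by (simp add: ennreal_leI flip: ennreal_mult)
  then show "emeasure (M x) A \<le> ennreal (exp (real k * \<epsilon>)) * emeasure (M y) A"
    by (simp only: X.emeasure_eq_measure Y.emeasure_eq_measure)
next
  show "sets (M x) = sets (M y)"
    using sets_mechanism[OF mech] by simp
  show "(\<lambda>s. ennreal (l (dist s t))) \<in> borel_measurable (M y)"
    by (subst measurable_cong_sets[OF sets_mechanism[OF mech] refl])
      (rule borel_measurable_loss[OF assms(4)])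
qed

lemma exp_loss_ge_tail:
  assumes mech: "mechanism M" and l_nonneg: "\<And>t. t \<ge> 0 \<Longrightarrow> l t \<ge> 0"
    and l_mono: "mono_on {0..} l" and r: "r \<ge> 0"
  shows "ennreal (l r * measure (M x) (- ball t r)) \<le> exp_loss l M x t"
proof -
  interpret prob_space "M x" using mech by (rule mechanism_prob_space)
  have "ennreal (l r * measure (M x) (- ball t r)) = (\<integral>\<^sup>+ s. ennreal (l r) * indicator (- ball t r) s \<partial>M x)"
    using l_nonneg[OF r] sets_mechanism[OF mech]
    by (simp add: emeasure_eq_measure ennreal_mult nn_integral_cmult_indicator)
  also have "\<dots> \<le> (\<integral>\<^sup>+ s. ennreal (l (dist s t)) \<partial>M x)"
    using r by (intro nn_integral_mono)
      (auto simp: indicator_def dist_commute intro!: ennreal_leI mono_onD[OF l_mono])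
  finally show ?thesis
    unfolding exp_loss_def .
qed

lemma finite_measure_ball_overlap_small:
  fixes c :: "'t::metric_space"
  assumes "finite_measure P" "sets P = sets borel" "\<delta> > 0"
    and far: "\<And>\<eta>. \<eta> > 0 \<Longrightarrow> \<exists>u\<in>U. 2 * r - \<eta> < dist c u"
  shows "\<exists>u\<in>U. measure P (ball c r \<inter> ball u r) < \<delta>"
proof -
  interpret finite_measure P by fact
  define A where "A m = {s. r - inverse (real (Suc m)) < dist c s \<and> dist c s < r}" for m
  have "open (A m)" for m
    unfolding A_def by (intro open_Collect_conj open_Collect_less continuous_intros)
  then have A_sets: "range A \<subseteq> sets P"
    using assms(2) by auto
  have "decseq A"
  proof (rule decseq_SucI)
    fix m
    have "inverse (real (Suc (Suc m))) \<le> inverse (real (Suc m))"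
      by (intro le_imp_inverse_le) auto
    then show "A (Suc m) \<subseteq> A m"
      unfolding A_def by (smt (verit) Collect_mono_iff)
  qed
  moreover have "(\<Inter>m. A m) = {}"
  proof (rule ccontr)
    assume "(\<Inter>m. A m) \<noteq> {}"
    then obtain s where s: "\<And>m. s \<in> A m" by blast
    then have "dist c s < r"
      unfolding A_def by blast
    then obtain m where "inverse (real (Suc m)) < r - dist c s"
      using reals_Archimedean[of "r - dist c s"] by auto
    then show False
      using s[of m] unfolding A_def by auto
  qed
  ultimately have "(\<lambda>m. measure P (A m)) \<longlonglongrightarrow> 0"
    using finite_Lim_measure_decseq[OF A_sets] by simp
  from order_tendstoD(2)[OF this \<open>\<delta> > 0\<close>] obtain m where m: "measure P (A m) < \<delta>"
    by (auto simp: eventually_sequentially)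
  obtain u where u: "u \<in> U" "2 * r - inverse (real (Suc m)) < dist c u"
    using far[of "inverse (real (Suc m))"] by auto
  have "ball c r \<inter> ball u r \<subseteq> A m"
  proof
    fix s assume s: "s \<in> ball c r \<inter> ball u r"
    have "dist c u \<le> dist c s + dist u s"
      by (metis dist_commute dist_triangle)
    then show "s \<in> A m"
      using s u(2) unfolding A_def by auto
  qed
  then have "measure P (ball c r \<inter> ball u r) \<le> measure P (A m)"
    using A_sets by (intro finite_measure_mono) auto
  then show ?thesis
    using m u(1) by force
qed

lemma ereal_le_loc_modE:
  assumes "ereal d \<le> loc_mod f x k" "\<eta> > 0"
  obtains x' where "real (hamming x x') \<le> k" "d - \<eta> < dist (f x) (f x')"
proof -
  have "ereal (d - \<eta>) < ereal d"
    using assms(2) by simp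
  then have "ereal (d - \<eta>) < loc_mod f x k"
    using assms(1) by (rule less_le_trans)
  then show ?thesis
    using that unfolding loc_mod_def less_SUP_iff by auto
qed

lemma loc_mod_ball_overlap_small:
  assumes mech: "mechanism M" and "ereal (2 * r) \<le> loc_mod f x (real k)" "\<delta> > 0"
  obtains x' where "hamming x x' \<le> k" "measure (M x) (ball (f x) r \<inter> ball (f x') r) < \<delta>"
proof -
  interpret prob_space "M x"
    using mech by (rule mechanism_prob_space)
  have "\<exists>u \<in> f ` {x'. hamming x x' \<le> k}. measure (M x) (ball (f x) r \<inter> ball u r) < \<delta>"
  proof (rule finite_measure_ball_overlap_small)
    fix \<eta> :: real assume "\<eta> > 0"
    then show "\<exists>u \<in> f ` {x'. hamming x x' \<le> k}. 2 * r - \<eta> < dist (f x) u"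
      using assms(2) by (elim ereal_le_loc_modE) auto
  qed (use mech assms(3) in \<open>simp_all add: finite_measure_axioms sets_mechanism\<close>)
  then show ?thesis
    using that by blast
qed

text \<open>A mechanism cannot concentrate near t on input x and near u on a nearby input y unless the
  r-balls around t and u share mass under M y.\<close>

lemma exp_loss_ball_tradeoff:
  assumes mech: "mechanism M" and dp: "diff_private \<epsilon> M" and "\<epsilon> \<ge> 0"
    and l_nonneg: "\<And>t. t \<ge> 0 \<Longrightarrow> l t \<ge> 0" and l_mono: "mono_on {0..} l" and r: "r \<ge> 0"
    and "hamming x y \<le> k"
  shows "ennreal (l r) \<le> exp_loss l M x t + ennreal (exp (real k * \<epsilon>)) * exp_loss l M y u
           + ennreal (l r * exp (real k * \<epsilon>) * measure (M y) (ball t r \<inter> ball u r))"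
proof -
  interpret X: prob_space "M x" using mech by (rule mechanism_prob_space)
  interpret Y: prob_space "M y" using mech by (rule mechanism_prob_space)
  define L where "L = l r"
  define e where "e = exp (real k * \<epsilon>)"
  define a where "a = measure (M y) (ball t r \<inter> ball u r)"
  have L: "L \<ge> 0" "e \<ge> 0"
    unfolding L_def e_def using l_nonneg[OF r] by auto
  have sets: "sets (M x) = sets borel" "sets (M y) = sets borel"
    using mech by (simp_all add: sets_mechanism)
  have "X.prob (ball t r) \<le> e * Y.prob (ball t r)"
    unfolding e_def using assms(2,3,7) by (intro diff_private_hamming) auto
  also have "Y.prob (ball t r) \<le> Y.prob (- ball u r \<union> (ball t r \<inter> ball u r))"
    using sets by (intro Y.finite_measure_mono) auto
  also have "\<dots> \<le> Y.prob (- ball u r) + a"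
    unfolding a_def using sets by (intro measure_Un_le) auto
  finally have "L * X.prob (ball t r) \<le> L * (e * (Y.prob (- ball u r) + a))"
    using L by (intro mult_left_mono) (auto intro: mult_left_mono)
  then have "L * X.prob (ball t r) \<le> e * (L * Y.prob (- ball u r)) + L * e * a"
    by (simp add: algebra_simps)
  moreover have "X.prob (- ball t r) + X.prob (ball t r) = 1"
    using X.prob_compl[of "ball t r"] sets by (simp add: Compl_eq_Diff_UNIV sets_eq_imp_space_eq)
  then have "L = L * X.prob (- ball t r) + L * X.prob (ball t r)"
    by (metis distrib_left mult.right_neutral)
  ultimately have "L \<le> L * X.prob (- ball t r) + e * (L * Y.prob (- ball u r)) + L * e * a"
    by linarith
  then have "ennreal L \<le> ennreal (L * X.prob (- ball t r) + e * (L * Y.prob (- ball u r)) + L * e * a)"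
    by (rule ennreal_leI)
  also have "\<dots> = ennreal (L * X.prob (- ball t r)) + ennreal e * ennreal (L * Y.prob (- ball u r))
      + ennreal (L * e * a)"
    using L by (simp add: a_def ennreal_plus ennreal_mult)
  also have "\<dots> \<le> exp_loss l M x t + ennreal e * exp_loss l M y u + ennreal (L * e * a)"
    unfolding L_def using mech l_nonneg l_mono r
    by (intro add_mono mult_left_mono exp_loss_ge_tail order.refl) auto
  finally show ?thesis
    unfolding L_def e_def a_def .
qed

lemma ennreal_le_of_forall_le_add_scaled:
  fixes x y :: ennreal
  assumes "c \<ge> 0" and le: "\<And>\<delta>. \<delta> > 0 \<Longrightarrow> x \<le> y + ennreal (c * \<delta>)"
  shows "x \<le> y"
proof (rule ennreal_le_epsilon)
  fix \<eta> :: real assume "\<eta> > 0"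
  then have "x \<le> y + ennreal (c * (\<eta> / (c + 1)))"
    using assms by (intro le) auto
  also have "c * (\<eta> / (c + 1)) \<le> \<eta>"
    using assms(1) \<open>\<eta> > 0\<close> by (simp add: field_simps)
  then have "y + ennreal (c * (\<eta> / (c + 1))) \<le> y + ennreal \<eta>"
    by (intro add_left_mono ennreal_leI)
  finally show "x \<le> y + ennreal \<eta>" .
qed

lemma SUP_exp_loss_ge:
  assumes mech: "mechanism M" and dp: "diff_private \<epsilon> M" and "\<epsilon> \<ge> 0"
    and l_nonneg: "\<And>t. t \<ge> 0 \<Longrightarrow> l t \<ge> 0" and l_mono: "mono_on {0..} l" and r: "r \<ge> 0"
    and far: "ereal (2 * r) \<le> loc_mod f x (real k)"
  shows "ennreal (l r) / ennreal (exp (real k * \<epsilon>) + 1) \<le> (SUP y. exp_loss l M y (f y))"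
proof -
  define e where "e = exp (real k * \<epsilon>)"
  define S where "S = (SUP y. exp_loss l M y (f y))"
  have S: "exp_loss l M y (f y) \<le> S" for y
    unfolding S_def by (rule SUP_upper) simp
  have "ennreal (l r) \<le> ennreal (e + 1) * S"
  proof (rule ennreal_le_of_forall_le_add_scaled)
    show "l r * e \<ge> 0"
      unfolding e_def using l_nonneg[OF r] by simp
    fix \<delta> :: real assume "\<delta> > 0"
    then obtain x' where x': "hamming x x' \<le> k" "measure (M x) (ball (f x) r \<inter> ball (f x') r) < \<delta>"
      using loc_mod_ball_overlap_small[OF mech far] by blast
    have x'_sym: "hamming x' x \<le> k"
      by (subst hamming_commute) (fact x'(1))
    have "ennreal (l r) \<le> exp_loss l M x' (f x') + ennreal e * exp_loss l M x (f x)
        + ennreal (l r * e * measure (M x) (ball (f x') r \<inter> ball (f x) r))"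
      unfolding e_def by (rule exp_loss_ball_tradeoff[OF mech dp \<open>\<epsilon> \<ge> 0\<close> l_nonneg l_mono r x'_sym])
    also have "\<dots> \<le> S + ennreal e * S + ennreal (l r * e * \<delta>)"
      using x'(2) \<open>l r * e \<ge> 0\<close>
      by (intro add_mono mult_left_mono S ennreal_leI) (auto simp: Int_commute)
    finally show "ennreal (l r) \<le> ennreal (e + 1) * S + ennreal (l r * e * \<delta>)"
      unfolding e_def by (simp add: distrib_right add.commute)
  qed
  then show ?thesis
    unfolding e_def S_def by (intro divide_le_posI_ennreal) (auto intro: add_pos_pos)
qed

text \<open>For an unbiased mechanism the loss at x' is compared with the loss at x twice: once through
  unbiasedness and group privacy, once through the overlap measured under M x'.\<close>

lemma exp_loss_ge_unbiased:
  assumes mech: "mechanism M" and dp: "diff_private \<epsilon> M" and "\<epsilon> \<ge> 0"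
    and l_nonneg: "\<And>t. t \<ge> 0 \<Longrightarrow> l t \<ge> 0" and l_mono: "mono_on {0..} l" and r: "r \<ge> 0"
    and unb: "unbiased l M f"
    and far: "ereal (2 * r) \<le> loc_mod f x (real k)"
  shows "ennreal (l r) / ennreal (exp (2 * real k * \<epsilon>) + 1) \<le> exp_loss l M x (f x)"
proof -
  define e where "e = exp (real k * \<epsilon>)"
  define s where "s = exp_loss l M x (f x)"
  have "ennreal (l r) \<le> ennreal (e * e + 1) * s"
  proof (rule ennreal_le_of_forall_le_add_scaled)
    show "l r * e * e \<ge> 0"
      unfolding e_def using l_nonneg[OF r] by simp
    fix \<delta> :: real assume "\<delta> > 0"
    then obtain x' where x': "hamming x x' \<le> k" "measure (M x) (ball (f x) r \<inter> ball (f x') r) < \<delta>"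
      using loc_mod_ball_overlap_small[OF mech far] by blast
    have x'_sym: "hamming x' x \<le> k"
      by (subst hamming_commute) (fact x'(1))
    have "exp_loss l M x' (f x') \<le> exp_loss l M x' (f x)"
      using unb unfolding unbiased_def by blast
    also have "\<dots> \<le> ennreal e * s"
      unfolding e_def s_def by (rule exp_loss_hamming[OF mech dp \<open>\<epsilon> \<ge> 0\<close> l_mono x'_sym])
    finally have loss': "exp_loss l M x' (f x') \<le> ennreal e * s" .
    have "measure (M x') (ball (f x) r \<inter> ball (f x') r) \<le> e * measure (M x) (ball (f x) r \<inter> ball (f x') r)"
      unfolding e_def by (rule diff_private_hamming[OF dp \<open>\<epsilon> \<ge> 0\<close> x'_sym]) simp
    also have "\<dots> \<le> e * \<delta>"
      using x'(2) unfolding e_def by simp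
    finally have overlap': "l r * e * measure (M x') (ball (f x) r \<inter> ball (f x') r) \<le> l r * e * (e * \<delta>)"
      using l_nonneg[OF r] unfolding e_def by (intro mult_left_mono) auto
    have "ennreal (l r) \<le> s + ennreal e * exp_loss l M x' (f x')
        + ennreal (l r * e * measure (M x') (ball (f x) r \<inter> ball (f x') r))"
      unfolding e_def s_def by (rule exp_loss_ball_tradeoff[OF mech dp \<open>\<epsilon> \<ge> 0\<close> l_nonneg l_mono r x'(1)])
    also have "\<dots> \<le> s + ennreal e * (ennreal e * s) + ennreal (l r * e * (e * \<delta>))"
      using loss' ennreal_leI[OF overlap'] by (intro add_mono mult_left_mono order.refl) auto
    finally show "ennreal (l r) \<le> ennreal (e * e + 1) * s + ennreal (l r * e * e * \<delta>)"
      unfolding e_def by (simp add: distrib_right add.commute mult.assoc ennreal_mult)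
  qed
  moreover have "e * e = exp (2 * real k * \<epsilon>)"
    unfolding e_def by (simp flip: exp_add)
  ultimately show ?thesis
    unfolding s_def by (intro divide_le_posI_ennreal) (auto intro: add_pos_pos)
qed

lemma ell_ext_half_loc_mod_div_le:
  assumes "k \<ge> 0"
    and le: "\<And>r. r \<ge> 0 \<Longrightarrow> ereal (2 * r) \<le> loc_mod f x k \<Longrightarrow> ennreal (l r) / c \<le> Q"
  shows "ell_ext l (loc_mod f x k / 2) / c \<le> Q"
proof -
  define w where "w = loc_mod f x k"
  have "0 \<le> w"
    unfolding w_def loc_mod_def using \<open>k \<ge> 0\<close> by (intro SUP_upper2[of x]) auto
  then consider "w = \<infinity>" | w' where "w = ereal w'" "w' \<ge> 0"
    by (cases w) auto
  then show ?thesis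
  proof cases
    case 1
    have "ell_ext l (w / 2) / c = (SUP t \<in> {0..}. ennreal (l t) / c)"
      using 1 by (simp add: ell_ext_def SUP_divide_ennreal)
    also have "\<dots> \<le> Q"
      using 1 unfolding w_def by (intro SUP_least le) auto
    finally show ?thesis
      unfolding w_def .
  next
    case 2
    then have "ell_ext l (w / 2) = ennreal (l (w' / 2))"
      by (simp add: ell_ext_def)
    also have "ennreal (l (w' / 2)) / c \<le> Q"
      using 2 unfolding w_def by (intro le) auto
    finally show ?thesis
      unfolding w_def .
  qed
qed

theorem theorem1:
  fixes f :: "('n::finite \<Rightarrow> 'x) \<Rightarrow> 't::metric_space"
    and l :: "real \<Rightarrow> real"
    and M :: "('n \<Rightarrow> 'x) \<Rightarrow> 't measure"
    and \<epsilon> :: real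
  assumes l_nonneg: "\<And>t. t \<ge> 0 \<Longrightarrow> l t \<ge> 0"
    and l_mono: "mono_on {0..} l"
    and eps_pos: "\<epsilon> > 0"
    and mech: "mechanism M"
    and dp: "diff_private \<epsilon> M"
  shows "(\<forall>k::nat. k \<ge> 1 \<longrightarrow>
            (SUP x. exp_loss l M x (f x)) \<ge>
            (SUP x. ell_ext l (loc_mod f x (real k) / 2) / ennreal (exp (real k * \<epsilon>) + 1)))
       \<and> (unbiased l M f \<longrightarrow>
            (\<forall>x. \<forall>k::nat. k \<ge> 1 \<longrightarrow>
              exp_loss l M x (f x) \<ge>
              ell_ext l (loc_mod f x (real k) / 2) / ennreal (exp (2 * real k * \<epsilon>) + 1)))"
proof (intro conjI allI impI)
  fix k :: nat
  show "(SUP x. ell_ext l (loc_mod f x (real k) / 2) / ennreal (exp (real k * \<epsilon>) + 1))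
        \<le> (SUP x. exp_loss l M x (f x))"
    using less_imp_le[OF eps_pos]
    by (intro SUP_least ell_ext_half_loc_mod_div_le SUP_exp_loss_ge[OF mech dp _ l_nonneg l_mono]) auto
next
  fix x and k :: nat
  assume unb: "unbiased l M f"
  show "ell_ext l (loc_mod f x (real k) / 2) / ennreal (exp (2 * real k * \<epsilon>) + 1)
        \<le> exp_loss l M x (f x)"
    using less_imp_le[OF eps_pos]
    by (intro ell_ext_half_loc_mod_div_le exp_loss_ge_unbiased[OF mech dp _ l_nonneg l_mono _ unb]) auto
qed

end
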